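(* Let $\mathcal{F}$ be a 3CNF formula sampled from $\mathcal{P}^{\mathrm{plant}}_{n,p}$ with planted assignment $\varphi$, where $p\geq d/n^2$ and $d$ is a sufficiently large constant. Let $F_{SUPP}$ be the number of variables whose support with respect to $\varphi$ (the number of clauses of $\mathcal{F}$ they support w.r.t. $\varphi$) is less than $d/3$. Then with probability tending to $1$ as $n\to\infty$, $F_{SUPP}\leq e^{-\Theta(d)}n$.
   Context: 3CNF: each clause has exactly three literals over three distinct variables. $\mathcal{P}^{\mathrm{plant}}_{n,p}$: pick $\varphi$ uniformly at random in $\{\mathrm{TRUE},\mathrm{FALSE}\}^n$, then include each of the $7\binom n3$ 3-clauses satisfied by $\varphi$ independently with probability $p$. A variable $x$ supports a clause $C$ with respect to a partial assignment $\psi$ if $x$ is the only variable satisfying $C$ under $\psi$ and the other two variables of $C$ are assigned by $\psi$. *)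

theory Defs
  imports "HOL-Probability.Probability"
begin

(* A literal is a pair (variable, polarity): (x, True) is the literal x, (x, False) is \<not>x.
   Variables are 0..<n. A clause is a set of literals. *)
type_synonym lit = "nat \<times> bool"
type_synonym clause = "lit set"

definition clauses3 :: "nat \<Rightarrow> clause set" where
  "clauses3 n = {C. C \<subseteq> {0..<n} \<times> UNIV \<and> card C = 3 \<and> card (fst ` C) = 3}"

definition lit_true :: "(nat \<Rightarrow> bool) \<Rightarrow> lit \<Rightarrow> bool" where
  "lit_true \<phi> l \<longleftrightarrow> \<phi> (fst l) = snd l"

definition sat_clauses :: "nat \<Rightarrow> (nat \<Rightarrow> bool) \<Rightarrow> clause set" where
  "sat_clauses n \<phi> = {C \<in> clauses3 n. \<exists>l\<in>C. lit_true \<phi> l}"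

definition assignments :: "nat \<Rightarrow> (nat \<Rightarrow> bool) set" where
  "assignments n = PiE {0..<n} (\<lambda>_. UNIV)"

definition planted :: "nat \<Rightarrow> real \<Rightarrow> ((nat \<Rightarrow> bool) \<times> clause set) pmf" where
  "planted n p =
     bind_pmf (pmf_of_set (assignments n)) (\<lambda>\<phi>.
       map_pmf (\<lambda>f. (\<phi>, {C \<in> sat_clauses n \<phi>. f C}))
         (Pi_pmf (sat_clauses n \<phi>) False (\<lambda>_. bernoulli_pmf p)))"

definition supports :: "(nat \<Rightarrow> bool option) \<Rightarrow> nat \<Rightarrow> clause \<Rightarrow> bool" where
  "supports \<psi> x C \<longleftrightarrow>
     (\<exists>l\<in>C. fst l = x \<and> \<psi> x = Some (snd l)) \<and>
     (\<forall>l\<in>C. fst l \<noteq> x \<longrightarrow> \<psi> (fst l) \<noteq> None \<and> \<psi> (fst l) \<noteq> Some (snd l))"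

definition support :: "(nat \<Rightarrow> bool option) \<Rightarrow> clause set \<Rightarrow> nat \<Rightarrow> nat" where
  "support \<psi> F x = card {C \<in> F. supports \<psi> x C}"

definition F_SUPP :: "nat \<Rightarrow> real \<Rightarrow> (nat \<Rightarrow> bool) \<Rightarrow> clause set \<Rightarrow> nat" where
  "F_SUPP n d \<phi> F = card {x \<in> {0..<n}. real (support (Some \<circ> \<phi>) F x) < d / 3}"

end

theory Submission
  imports Defs
begin

text \<open>
  Let \<open>T\<^sub>x\<close> (\<open>supportable_clauses\<close>) be the set of clauses satisfied by the planted assignment only through the literal
  of x. These sets are pairwise disjoint, each has at least \<open>(n - 1) choose 2 \<ge> 0.48 n\<^sup>2\<close>
  elements, and the support of x is \<open>|F \<inter> T\<^sub>x|\<close>, a binomial variable of mean at least \<open>0.48 d\<close>.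
  Bounding the indicator of \<open>support x < d/3\<close> by \<open>(4/3)\<^bsup>d/3\<^esup> (3/4)\<^bsup>support x\<^esup>\<close> gives
  \<open>F_SUPP \<le> (4/3)\<^bsup>d/3\<^esup> \<Sum>\<^sub>x Z\<^sub>x\<close>, where the \<open>Z\<^sub>x = (3/4)\<^bsup>support x\<^esup> \<in> [0,1]\<close> are independent with
  mean \<open>(1 - p/4)\<^bsup>|T\<^sub>x|\<^esup> \<le> e\<^bsup>-0.12 d\<^esup>\<close>. The variance of \<open>\<Sum>\<^sub>x Z\<^sub>x\<close> is at most n, so by Chebyshev's
  inequality \<open>F_SUPP \<le> e\<^bsup>-d/240\<^esup> n\<close> fails with probability \<open>O(1/n)\<close> for every fixed \<open>d \<ge> 240\<close>.\<close>

lemma expectation_prod_bernoulli: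
  fixes q :: real
  assumes "finite S" "A \<subseteq> S" "0 \<le> p" "p \<le> 1" "0 \<le> q"
  shows "measure_pmf.expectation (Pi_pmf S False (\<lambda>_. bernoulli_pmf p))
           (\<lambda>f. \<Prod>C\<in>A. if f C then q else 1) = (1 - p + p * q) ^ card A"
proof -
  have "(\<Prod>C\<in>A. if f C then q else 1) = (\<Prod>C\<in>S. if C \<in> A \<and> f C then q else 1)" for f :: "'a \<Rightarrow> bool"
    using assms(1,2) by (intro prod.mono_neutral_cong_left) auto
  then have "measure_pmf.expectation (Pi_pmf S False (\<lambda>_. bernoulli_pmf p)) (\<lambda>f. \<Prod>C\<in>A. if f C then q else 1)
      = measure_pmf.expectation (Pi_pmf S False (\<lambda>_. bernoulli_pmf p))
          (\<lambda>f. \<Prod>C\<in>S. (\<lambda>C b. if C \<in> A \<and> b then q else 1) C (f C))"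
    by simp
  also have "\<dots> = (\<Prod>C\<in>S. measure_pmf.expectation (bernoulli_pmf p) (\<lambda>b. if C \<in> A \<and> b then q else 1))"
    using assms by (intro expectation_prod_Pi_pmf) (auto simp: integrable_measure_pmf_finite)
  also have "\<dots> = (\<Prod>C\<in>S. if C \<in> A then 1 - p + p * q else 1)"
    using assms by (intro prod.cong) (auto simp: algebra_simps)
  also have "\<dots> = (1 - p + p * q) ^ card A"
    using assms by (simp add: prod.If_cases Int_absorb1)
  finally show ?thesis .
qed

lemma expectation_prod_bernoulli_disjoint:
  fixes q :: real
  assumes "finite S" "A \<subseteq> S" "B \<subseteq> S" "A \<inter> B = {}" "0 \<le> p" "p \<le> 1" "0 \<le> q"
  shows "measure_pmf.expectation (Pi_pmf S False (\<lambda>_. bernoulli_pmf p))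
           (\<lambda>f. (\<Prod>C\<in>A. if f C then q else 1) * (\<Prod>C\<in>B. if f C then q else 1))
         = (1 - p + p * q) ^ card A * (1 - p + p * q) ^ card B"
proof -
  have fin: "finite A" "finite B" using assms by (auto intro: finite_subset)
  then have "(\<Prod>C\<in>A. if f C then q else 1) * (\<Prod>C\<in>B. if f C then q else 1)
      = (\<Prod>C\<in>A \<union> B. if f C then q else 1)" for f :: "'a \<Rightarrow> bool"
    using assms(4) by (simp add: prod.union_disjoint)
  then show ?thesis
    using assms fin by (simp add: expectation_prod_bernoulli card_Un_disjoint power_add)
qed

lemma prob_sum_deviation_ge_le:
  fixes M :: "'a pmf" and Z :: "'i \<Rightarrow> 'a \<Rightarrow> real"
  assumes "finite I" and Z01: "\<And>i \<omega>. 0 \<le> Z i \<omega> \<and> Z i \<omega> \<le> 1"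
    and uncorrelated: "\<And>i j. i \<in> I \<Longrightarrow> j \<in> I \<Longrightarrow> i \<noteq> j \<Longrightarrow>
      measure_pmf.expectation M (\<lambda>\<omega>. Z i \<omega> * Z j \<omega>)
        = measure_pmf.expectation M (Z i) * measure_pmf.expectation M (Z j)"
    and "s > 0"
  shows "measure_pmf.prob M {\<omega>. s \<le> \<bar>(\<Sum>i\<in>I. Z i \<omega>) - (\<Sum>i\<in>I. measure_pmf.expectation M (Z i))\<bar>}
           \<le> card I / s\<^sup>2"
proof -
  define E where "E i = measure_pmf.expectation M (Z i)" for i
  define Y where "Y \<omega> = (\<Sum>i\<in>I. Z i \<omega>)" for \<omega>
  have bounded_integrable: "integrable M f" if "\<And>\<omega>. \<bar>f \<omega>\<bar> \<le> B" for f :: "'a \<Rightarrow> real" and B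
    using that by (intro measure_pmf.integrable_const_bound[of _ B]) auto
  have int_Z: "integrable M (Z i)" and int_ZZ: "integrable M (\<lambda>\<omega>. Z i \<omega> * Z j \<omega>)" for i j
    using Z01 by (auto intro!: bounded_integrable[of _ 1] simp: abs_mult mult_le_one)
  have int_Y2: "integrable M (\<lambda>\<omega>. (Y \<omega>)\<^sup>2)"
    unfolding Y_def power2_eq_square sum_product by (intro Bochner_Integration.integrable_sum int_ZZ)
  have EY: "measure_pmf.expectation M Y = (\<Sum>i\<in>I. E i)"
    unfolding Y_def E_def by (simp add: Bochner_Integration.integral_sum int_Z)
  have EZZ: "measure_pmf.expectation M (\<lambda>\<omega>. Z i \<omega> * Z j \<omega>) \<le> (if i = j then 1 else 0) + E i * E j"
    if "i \<in> I" "j \<in> I" for i j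
  proof (cases "i = j")
    case True
    have "measure_pmf.expectation M (\<lambda>\<omega>. Z i \<omega> * Z j \<omega>) \<le> measure_pmf.expectation M (\<lambda>_. 1)"
      using Z01 by (intro integral_mono int_ZZ) (auto intro: mult_le_one)
    moreover have "0 \<le> E i * E j"
      using Z01 unfolding E_def by (simp add: integral_nonneg_AE)
    ultimately have "measure_pmf.expectation M (\<lambda>\<omega>. Z i \<omega> * Z j \<omega>) \<le> 1 + E i * E j"
      by simp
    then show ?thesis using True by simp
  qed (use uncorrelated that in \<open>simp add: E_def\<close>)
  have "measure_pmf.expectation M (\<lambda>\<omega>. (Y \<omega>)\<^sup>2)
      = (\<Sum>i\<in>I. \<Sum>j\<in>I. measure_pmf.expectation M (\<lambda>\<omega>. Z i \<omega> * Z j \<omega>))"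
    unfolding Y_def power2_eq_square sum_product by (simp add: Bochner_Integration.integral_sum int_ZZ)
  also have "\<dots> \<le> (\<Sum>i\<in>I. \<Sum>j\<in>I. (if i = j then 1 else 0) + E i * E j)"
    by (intro sum_mono EZZ)
  also have "\<dots> = card I + (\<Sum>i\<in>I. E i)\<^sup>2"
    using assms(1) by (simp add: sum.distrib power2_eq_square sum_product)
  finally have variance: "measure_pmf.variance M Y \<le> card I"
    using EY int_Y2 unfolding Y_def by (subst measure_pmf.variance_eq) (auto intro: int_Z)
  have "measure_pmf.prob M {\<omega> \<in> space M. s \<le> \<bar>Y \<omega> - measure_pmf.expectation M Y\<bar>}
      \<le> measure_pmf.variance M Y / s\<^sup>2"
    using \<open>s > 0\<close> int_Y2 by (intro measure_pmf.Chebyshev_inequality) auto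
  also have "\<dots> \<le> card I / s\<^sup>2"
    using variance by (simp add: divide_right_mono)
  finally show ?thesis
    by (simp add: EY Y_def E_def)
qed

lemma measure_bind_pmf_ge:
  assumes "\<And>x. r \<le> measure_pmf.prob (N x) A"
  shows "r \<le> measure_pmf.prob (bind_pmf M N) A"
proof (cases "r \<le> 0")
  case False
  have "ennreal r = (\<integral>\<^sup>+x. ennreal r \<partial>M)"
    by (simp add: measure_pmf.emeasure_space_1)
  also have "\<dots> \<le> (\<integral>\<^sup>+x. emeasure (N x) A \<partial>M)"
    by (intro nn_integral_mono) (simp add: measure_pmf.emeasure_eq_measure assms)
  also have "\<dots> = emeasure (bind_pmf M N) A"
    by simp
  also have "\<dots> = ennreal (measure_pmf.prob (bind_pmf M N) A)"
    by (simp add: measure_pmf.emeasure_eq_measure)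
  finally show ?thesis using False by simp
qed (use measure_nonneg in \<open>smt (verit)\<close>)

lemma card_less_le_sum_power:
  fixes t :: "'a \<Rightarrow> nat" and q a :: real
  assumes "finite X" "0 < q" "q \<le> 1"
  shows "card {x \<in> X. t x < a} \<le> inverse q powr a * (\<Sum>x\<in>X. q ^ t x)"
proof -
  have "(if t x < a then 1 else 0) \<le> inverse q powr a * q ^ t x" for x
  proof (cases "t x < a")
    case True
    have "inverse q ^ t x \<le> inverse q powr a"
      using True assms by (simp add: powr_realpow[symmetric] one_le_inverse powr_mono)
    then show ?thesis
      using True assms by (simp add: power_inverse field_simps)
  qed (use assms in simp)
  then have "(\<Sum>x\<in>X. if t x < a then 1 else 0) \<le> (\<Sum>x\<in>X. inverse q powr a * q ^ t x)"
    by (intro sum_mono)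
  then show ?thesis
    using assms(1) by (simp add: sum.If_cases sum_distrib_left Int_def)
qed

lemma finite_sat_clauses: "finite (sat_clauses n \<phi>)"
proof (rule finite_subset)
  show "sat_clauses n \<phi> \<subseteq> Pow ({0..<n} \<times> UNIV)"
    unfolding sat_clauses_def clauses3_def by auto
qed simp

definition supportable_clauses :: "nat \<Rightarrow> (nat \<Rightarrow> bool) \<Rightarrow> nat \<Rightarrow> clause set" where
  "supportable_clauses n \<phi> x = {C \<in> sat_clauses n \<phi>. supports (Some \<circ> \<phi>) x C}"

lemma supportable_clauses_disjoint:
  "x \<noteq> y \<Longrightarrow> supportable_clauses n \<phi> x \<inter> supportable_clauses n \<phi> y = {}"
  unfolding supportable_clauses_def supports_def by fastforce

lemma support_eq_card_supportable:
  "support (Some \<circ> \<phi>) {C \<in> sat_clauses n \<phi>. f C} x = card {C \<in> supportable_clauses n \<phi> x. f C}"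
  unfolding support_def supportable_clauses_def by (metis (lifting) Collect_cong mem_Collect_eq)

lemma insert_negated_in_supportable_clauses:
  assumes "x < n" "B \<subseteq> {0..<n} - {x}" "card B = 2"
  shows "insert (x, \<phi> x) ((\<lambda>y. (y, \<not> \<phi> y)) ` B) \<in> supportable_clauses n \<phi> x"
    (is "?C \<in> _")
proof -
  have "finite B"
    using assms(3) by (auto intro: card_ge_0_finite)
  have "fst ` ?C = insert x B"
    by (auto simp: image_image)
  moreover have "card (insert x B) = 3"
    using assms \<open>finite B\<close> by (subst card_insert_disjoint) auto
  ultimately have "card (fst ` ?C) = 3"
    by simp
  moreover have "card ?C \<le> 3"
    using assms \<open>finite B\<close> card_image_le[OF \<open>finite B\<close>, of "\<lambda>y. (y, \<not> \<phi> y)"]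
    by (simp add: card_insert_if)
  moreover have "card (fst ` ?C) \<le> card ?C"
    using \<open>finite B\<close> by (intro card_image_le) simp
  ultimately have "card ?C = 3"
    by linarith
  moreover have "?C \<subseteq> {0..<n} \<times> UNIV"
    using assms by auto
  moreover have "supports (Some \<circ> \<phi>) x ?C" "\<exists>l\<in>?C. lit_true \<phi> l"
    using assms unfolding supports_def lit_true_def by auto
  ultimately show ?thesis
    using \<open>card (fst ` ?C) = 3\<close> unfolding supportable_clauses_def sat_clauses_def clauses3_def by simp
qed

lemma card_supportable_clauses_ge:
  assumes "x < n"
  shows "(n - 1) choose 2 \<le> card (supportable_clauses n \<phi> x)"
proof -
  define clause where "clause B = insert (x, \<phi> x) ((\<lambda>y. (y, \<not> \<phi> y)) ` B)" for B
  define pairs where "pairs = {B. B \<subseteq> {0..<n} - {x} \<and> card B = 2}"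
  have "inj_on clause pairs"
  proof (rule inj_onI)
    fix B B' assume "B \<in> pairs" "B' \<in> pairs" "clause B = clause B'"
    moreover have "fst ` clause C - {x} = C" if "C \<in> pairs" for C
      using that unfolding clause_def pairs_def by (auto simp: image_image)
    ultimately show "B = B'"
      by metis
  qed
  moreover have "clause ` pairs \<subseteq> supportable_clauses n \<phi> x"
    unfolding clause_def pairs_def using assms insert_negated_in_supportable_clauses by blast
  then have "card (clause ` pairs) \<le> card (supportable_clauses n \<phi> x)"
    unfolding supportable_clauses_def by (intro card_mono) (auto simp: finite_sat_clauses)
  moreover have "card pairs = (n - 1) choose 2"
    using assms unfolding pairs_def by (subst n_subsets) auto
  ultimately show ?thesis
    by (simp add: card_image)
qed

text \<open>The weight \<open>(3/4)\<^bsup>support x\<^esup>\<close> of the formula \<open>{C \<in> sat_clauses n \<phi>. f C}\<close>.\<close>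

definition supportable_weight :: "nat \<Rightarrow> (nat \<Rightarrow> bool) \<Rightarrow> nat \<Rightarrow> (clause \<Rightarrow> bool) \<Rightarrow> real" where
  "supportable_weight n \<phi> x f = (\<Prod>C\<in>supportable_clauses n \<phi> x. if f C then 3/4 else 1)"

lemma F_SUPP_le_sum_supportable_weight:
  "real (F_SUPP n d \<phi> {C \<in> sat_clauses n \<phi>. f C})
     \<le> (4/3) powr (d/3) * (\<Sum>x\<in>{0..<n}. supportable_weight n \<phi> x f)"
proof -
  have finite: "finite (supportable_clauses n \<phi> x)" for x
    unfolding supportable_clauses_def using finite_sat_clauses by simp
  have power: "(3/4 :: real) ^ support (Some \<circ> \<phi>) {C \<in> sat_clauses n \<phi>. f C} x = supportable_weight n \<phi> x f"
    for x
    using finite unfolding supportable_weight_def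
    by (simp add: support_eq_card_supportable prod.If_cases Int_def)
  have "real (F_SUPP n d \<phi> {C \<in> sat_clauses n \<phi>. f C})
      \<le> inverse (3/4) powr (d/3) * (\<Sum>x\<in>{0..<n}. (3/4) ^ support (Some \<circ> \<phi>) {C \<in> sat_clauses n \<phi>. f C} x)"
    unfolding F_SUPP_def by (rule card_less_le_sum_power) auto
  then show ?thesis
    by (simp only: power) simp
qed

lemma supportable_clauses_subset: "supportable_clauses n \<phi> x \<subseteq> sat_clauses n \<phi>"
  unfolding supportable_clauses_def by auto

lemma expectation_supportable_weight:
  assumes "0 \<le> p" "p \<le> 1"
  shows "measure_pmf.expectation (Pi_pmf (sat_clauses n \<phi>) False (\<lambda>_. bernoulli_pmf p))
           (supportable_weight n \<phi> x) = (1 - p/4) ^ card (supportable_clauses n \<phi> x)"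
  using expectation_prod_bernoulli[OF finite_sat_clauses supportable_clauses_subset assms, of "3/4"]
  unfolding supportable_weight_def by (simp add: algebra_simps)

lemma prob_sum_supportable_weight_deviation_le:
  fixes n :: nat and \<phi> :: "nat \<Rightarrow> bool" and p s :: real
  assumes p: "0 \<le> p" "p \<le> 1" and "0 < s"
  defines "Q \<equiv> Pi_pmf (sat_clauses n \<phi>) False (\<lambda>_. bernoulli_pmf p)"
  shows "measure_pmf.prob Q {f. s \<le> \<bar>(\<Sum>x\<in>{0..<n}. supportable_weight n \<phi> x f)
           - (\<Sum>x\<in>{0..<n}. measure_pmf.expectation Q (supportable_weight n \<phi> x))\<bar>} \<le> n / s\<^sup>2"
proof (rule order.trans[OF prob_sum_deviation_ge_le])
  show "0 \<le> supportable_weight n \<phi> x f \<and> supportable_weight n \<phi> x f \<le> 1" for x f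
    unfolding supportable_weight_def by (auto intro: prod_nonneg prod_le_1)
  show "measure_pmf.expectation Q (\<lambda>f. supportable_weight n \<phi> x f * supportable_weight n \<phi> y f)
      = measure_pmf.expectation Q (supportable_weight n \<phi> x) * measure_pmf.expectation Q (supportable_weight n \<phi> y)"
    if "x \<noteq> y" for x y
    using expectation_prod_bernoulli_disjoint[OF finite_sat_clauses supportable_clauses_subset
        supportable_clauses_subset supportable_clauses_disjoint[OF that] p, of "3/4"]
    unfolding Q_def expectation_supportable_weight[OF p]
    by (simp add: supportable_weight_def algebra_simps)
qed (use \<open>0 < s\<close> in auto)

lemma prob_F_SUPP_le_given_assignment:
  fixes d p s :: real
  assumes p: "0 \<le> p" "p \<le> 1" and "0 < s"
  shows "1 - n / s\<^sup>2 \<le> measure_pmf.prob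
           (map_pmf (\<lambda>f. (\<phi>, {C \<in> sat_clauses n \<phi>. f C})) (Pi_pmf (sat_clauses n \<phi>) False (\<lambda>_. bernoulli_pmf p)))
           {(\<phi>, F). real (F_SUPP n d \<phi> F) \<le> (4/3) powr (d/3) * (n * (1 - p/4) ^ ((n - 1) choose 2) + s)}"
proof -
  define Q where "Q = Pi_pmf (sat_clauses n \<phi>) False (\<lambda>_. bernoulli_pmf p)"
  define Z where "Z = supportable_weight n \<phi>"
  define m where "m = (1 - p/4) ^ ((n - 1) choose 2)"
  define deviating where
    "deviating = {f. s \<le> \<bar>(\<Sum>x\<in>{0..<n}. Z x f) - (\<Sum>x\<in>{0..<n}. measure_pmf.expectation Q (Z x))\<bar>}"
  define good where
    "good = {f. real (F_SUPP n d \<phi> {C \<in> sat_clauses n \<phi>. f C}) \<le> (4/3) powr (d/3) * (n * m + s)}"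
  have EZ_le: "measure_pmf.expectation Q (Z x) \<le> m" if "x < n" for x
    unfolding Q_def Z_def m_def expectation_supportable_weight[OF p]
    using p card_supportable_clauses_ge[OF that] by (intro power_decreasing) auto
  have "- deviating \<subseteq> good"
  proof
    fix f assume "f \<in> - deviating"
    then have "\<bar>(\<Sum>x\<in>{0..<n}. Z x f) - (\<Sum>x\<in>{0..<n}. measure_pmf.expectation Q (Z x))\<bar> < s"
      unfolding deviating_def by auto
    moreover have "(\<Sum>x\<in>{0..<n}. measure_pmf.expectation Q (Z x)) \<le> n * m"
      using sum_mono[of "{0..<n}" _ "\<lambda>_. m", OF EZ_le] by simp
    ultimately have "(\<Sum>x\<in>{0..<n}. Z x f) \<le> n * m + s"
      by linarith
    then have "(4/3) powr (d/3) * (\<Sum>x\<in>{0..<n}. Z x f) \<le> (4/3) powr (d/3) * (n * m + s)"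
      by (rule mult_left_mono) simp
    then show "f \<in> good"
      unfolding good_def Z_def using order.trans[OF F_SUPP_le_sum_supportable_weight] by simp
  qed
  then have "measure_pmf.prob Q (- deviating) \<le> measure_pmf.prob Q good"
    by (intro measure_pmf.finite_measure_mono) auto
  moreover have "measure_pmf.prob Q (- deviating) = 1 - measure_pmf.prob Q deviating"
    using measure_pmf.prob_compl[of deviating Q] by (simp add: Compl_eq_Diff_UNIV)
  moreover have "measure_pmf.prob Q deviating \<le> n / s\<^sup>2"
    unfolding deviating_def Q_def Z_def using p \<open>0 < s\<close> by (rule prob_sum_supportable_weight_deviation_le)
  ultimately show ?thesis
    unfolding Q_def m_def good_def by (simp add: case_prod_beta' vimage_def)
qed

lemma prob_F_SUPP_le_planted:
  fixes d p s :: real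
  assumes "0 \<le> p" "p \<le> 1" "0 < s"
  shows "1 - n / s\<^sup>2 \<le> measure_pmf.prob (planted n p)
           {(\<phi>, F). real (F_SUPP n d \<phi> F) \<le> (4/3) powr (d/3) * (n * (1 - p/4) ^ ((n - 1) choose 2) + s)}"
  unfolding planted_def using assms by (intro measure_bind_pmf_ge prob_F_SUPP_le_given_assignment)

lemma choose_two_pred_ge:
  assumes "100 \<le> n"
  shows "12/25 * (real n)\<^sup>2 \<le> real ((n - 1) choose 2)"
proof -
  have "even ((n - 1) * (n - 1 - 1))"
    by (cases "n - 1") auto
  then have "2 * ((n - 1) choose 2) = (n - 1) * (n - 1 - 1)"
    by (simp add: choose_two)
  then have "2 * real ((n - 1) choose 2) = real (n - 1) * real (n - 1 - 1)"
    by (metis of_nat_mult of_nat_numeral)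
  also have "\<dots> = (real n)\<^sup>2 - 3 * real n + 2"
    using assms by (simp add: of_nat_diff power2_eq_square algebra_simps)
  finally have "2 * real ((n - 1) choose 2) = (real n)\<^sup>2 - 3 * real n + 2" .
  moreover have "100 * real n \<le> (real n)\<^sup>2"
    using assms unfolding power2_eq_square by (intro mult_right_mono) auto
  ultimately show ?thesis
    by linarith
qed

lemma powr_four_thirds_mult_power_le_exp:
  fixes d p :: real
  assumes "100 \<le> n" "0 \<le> d" "d / (real n)\<^sup>2 \<le> p" "p \<le> 1"
  shows "(4/3) powr (d/3) * (1 - p/4) ^ ((n - 1) choose 2) \<le> exp (- d / 120)"
proof -
  define N where "N = (n - 1) choose 2"
  have "0 \<le> p"
    using assms(2,3) by (meson divide_nonneg_nonneg order_trans zero_le_power2)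
  have "12/25 * d \<le> real N * p"
  proof -
    have "12/25 * d = 12/25 * (real n)\<^sup>2 * (d / (real n)\<^sup>2)"
      using assms by simp
    also have "\<dots> \<le> real N * p"
      using assms choose_two_pred_ge[OF assms(1)] unfolding N_def
      by (intro mult_mono) auto
    finally show ?thesis .
  qed
  have "(1 - p/4) ^ N \<le> exp (- p/4) ^ N"
    using assms \<open>0 \<le> p\<close> exp_ge_add_one_self[of "- p/4"] by (intro power_mono) auto
  also have "\<dots> = exp (- p * real N / 4)"
    by (simp flip: exp_of_nat_mult)
  finally have "(1 - p/4) ^ N \<le> exp (- p * real N / 4)" .
  moreover have "(4/3 :: real) powr (d/3) \<le> exp (d/9)"
  proof -
    have "ln (4/3 :: real) \<le> 1/3"
      using ln_le_minus_one[of "4/3 :: real"] by simp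
    then have "ln (4/3 :: real) * (d/3) \<le> 1/3 * (d/3)"
      using assms by (intro mult_right_mono) auto
    then show ?thesis
      by (simp add: powr_def)
  qed
  ultimately have "(4/3) powr (d/3) * (1 - p/4) ^ N \<le> exp (d/9) * exp (- p * real N / 4)"
    using \<open>p \<le> 1\<close> by (intro mult_mono) auto
  also have "\<dots> \<le> exp (- d / 120)"
    using \<open>12/25 * d \<le> real N * p\<close> assms by (simp flip: exp_add add: algebra_simps)
  finally show ?thesis
    unfolding N_def .
qed

lemma prob_F_SUPP_small_planted:
  fixes d p :: real
  assumes d: "240 \<le> d" and n: "100 \<le> n" and p: "d / (real n)\<^sup>2 \<le> p" "p \<le> 1"
  shows "1 - 4 * ((4/3) powr (d/3) / exp (- d/240))\<^sup>2 / n
           \<le> measure_pmf.prob (planted n p) {(\<phi>, F). real (F_SUPP n d \<phi> F) \<le> exp (- (1/240) * d) * n}"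
proof -
  define K where "K = (4/3 :: real) powr (d/3)"
  define e where "e = exp (- d/240)"
  define s where "s = n * e / (2 * K)"
  have "K > 0" "e > 0" "s > 0"
    using n unfolding K_def e_def s_def by auto
  have "0 \<le> p"
    using d p(1) by (meson divide_nonneg_nonneg order_trans zero_le_power2 zero_le_numeral)
  have "exp (- d/120) = e * exp (- d/240)"
    unfolding e_def by (simp flip: exp_add)
  moreover have "exp (- d/240) \<le> 1/2"
    using exp_ge_add_one_self[of "d/240"] d by (simp add: exp_minus field_simps)
  ultimately have "exp (- d/120) \<le> e/2"
    using mult_left_mono[of "exp (- d/240)" "1/2" e] \<open>e > 0\<close> by simp
  moreover have "K * (1 - p/4) ^ ((n - 1) choose 2) \<le> exp (- d/120)"
    unfolding K_def using d by (intro powr_four_thirds_mult_power_le_exp[OF n _ p]) simp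
  ultimately have "n * (K * (1 - p/4) ^ ((n - 1) choose 2)) \<le> n * (e/2)"
    by (intro mult_left_mono) simp_all
  moreover have "K * s = n * (e/2)"
    unfolding s_def using \<open>K > 0\<close> by simp
  ultimately have bound: "K * (n * (1 - p/4) ^ ((n - 1) choose 2) + s) \<le> exp (- (1/240) * d) * n"
    unfolding e_def by (simp add: algebra_simps)
  have "1 - n / s\<^sup>2 \<le> measure_pmf.prob (planted n p)
          {(\<phi>, F). real (F_SUPP n d \<phi> F) \<le> K * (n * (1 - p/4) ^ ((n - 1) choose 2) + s)}"
    unfolding K_def using \<open>0 \<le> p\<close> p(2) \<open>s > 0\<close> by (rule prob_F_SUPP_le_planted)
  also have "\<dots> \<le> measure_pmf.prob (planted n p) {(\<phi>, F). real (F_SUPP n d \<phi> F) \<le> exp (- (1/240) * d) * n}"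
    using bound by (intro measure_pmf.finite_measure_mono) auto
  finally show ?thesis
    using n \<open>K > 0\<close> \<open>e > 0\<close> unfolding s_def K_def e_def by (simp add: field_simps power2_eq_square)
qed

theorem proposition2:
  shows "\<exists>c>0. \<exists>d0. \<forall>d\<ge>d0. \<forall>p :: nat \<Rightarrow> real.
           (\<forall>\<^sub>F n in sequentially. d / (real n)^2 \<le> p n \<and> p n \<le> 1) \<longrightarrow>
           (\<lambda>n. measure_pmf.prob (planted n (p n))
                  {(\<phi>, F). real (F_SUPP n d \<phi> F) \<le> exp (- c * d) * real n})
             \<longlonglongrightarrow> 1"
proof (rule exI[of _ "1/240"], intro conjI exI[of _ 240] allI impI)
  fix d :: real and p :: "nat \<Rightarrow> real"
  assume d: "240 \<le> d" and p: "\<forall>\<^sub>F n in sequentially. d / (real n)^2 \<le> p n \<and> p n \<le> 1"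
  define C where "C = 4 * ((4/3) powr (d/3) / exp (- d/240))\<^sup>2"
  let ?P = "\<lambda>n. measure_pmf.prob (planted n (p n))
              {(\<phi>, F). real (F_SUPP n d \<phi> F) \<le> exp (- (1/240) * d) * real n}"
  have lower: "1 - C / n \<le> ?P n" if "100 \<le> n" "d / (real n)^2 \<le> p n" "p n \<le> 1" for n
    unfolding C_def using d that by (rule prob_F_SUPP_small_planted)
  have "\<forall>\<^sub>F n in sequentially. 1 - C / n \<le> ?P n"
    using eventually_conj[OF eventually_ge_at_top[of 100] p] by (rule eventually_mono) (use lower in blast)
  moreover have "\<forall>\<^sub>F n in sequentially. ?P n \<le> 1"
    by simp
  moreover have "(\<lambda>n. 1 - C / n) \<longlonglongrightarrow> 1"
    using tendsto_diff[OF tendsto_const lim_const_over_n[of C]] by simp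
  ultimately show "?P \<longlonglongrightarrow> 1"
    using tendsto_const by (rule tendsto_sandwich)
qed simp

end
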